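(* Let $M,N,K\ge 1$ be integers, $\mathcal K=\{1,\dots,K\}$, $\mathbf G\in\mathbb C^{N\times M}$, $\mathbf h_1,\dots,\mathbf h_K\in\mathbb C^{M}$, $P_0>0$, and for each $k\in\mathcal K$ let $\Gamma_k>0$ and $\sigma_k^2>0$. Write $\mathbf H_k=\mathbf h_k\mathbf h_k^H$. For a positive semidefinite $\mathbf R\in\mathbb C^{M\times M}$ let $f(\mathbf R)=\mathrm{tr}\big((\mathbf G\mathbf R\mathbf G^H)^{-1}\big)$ when $\mathbf G\mathbf R\mathbf G^H$ is invertible, and $f(\mathbf R)=+\infty$ otherwise. Consider the problems: (P1.1): minimize $f\big(\sum_{k\in\mathcal K}\mathbf w_k\mathbf w_k^H+\mathbf R_0\big)$ over $\mathbf w_1,\dots,\mathbf w_K\in\mathbb C^M$ and Hermitian $\mathbf R_0\in\mathbb C^{M\times M}$, subject to $\frac{|\mathbf h_k^H\mathbf w_k|^2}{\sum_{i\in\mathcal K,i\ne k}|\mathbf h_k^H\mathbf w_i|^2+\mathbf h_k^H\mathbf R_0\mathbf h_k+\sigma_k^2}\ge\Gamma_k$ for all $k\in\mathcal K$, $\sum_{k\in\mathcal K}\|\mathbf w_k\|^2+\mathrm{tr}(\mathbf R_0)\le P_0$, and $\mathbf R_0\succeq\mathbf 0$; (P1.2): minimize $f\big(\sum_{k\in\mathcal K}\mathbf W_k+\mathbf R_0\big)$ over Hermitian $\mathbf W_1,\dots,\mathbf W_K,\mathbf R_0\in\mathbb C^{M\times M}$, subject to $\frac{1}{\Gamma_k}\mathrm{tr}(\mathbf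 H_k\mathbf W_k)-\sum_{i\in\mathcal K,i\ne k}\mathrm{tr}(\mathbf H_k\mathbf W_i)-\mathrm{tr}(\mathbf H_k\mathbf R_0)\ge\sigma_k^2$ for all $k\in\mathcal K$, $\sum_{k\in\mathcal K}\mathrm{tr}(\mathbf W_k)+\mathrm{tr}(\mathbf R_0)\le P_0$, $\mathbf R_0\succeq\mathbf 0$, $\mathbf W_k\succeq\mathbf 0$ and $\mathrm{rank}(\mathbf W_k)\le 1$ for all $k\in\mathcal K$; (SDR1.2): the same as (P1.2) but without the constraints $\mathrm{rank}(\mathbf W_k)\le1$. Then (P1.1), (P1.2) and (SDR1.2) have the same optimal value. Moreover, if $\{\tilde{\mathbf W}_k\}_{k\in\mathcal K},\tilde{\mathbf R}_0$ is an optimal solution of (SDR1.2), then $\mathbf w_k^\star=(\mathbf h_k^H\tilde{\mathbf W}_k\mathbf h_k)^{-1/2}\tilde{\mathbf W}_k\mathbf h_k$ for $k\in\mathcal K$ and $\mathbf R_0^\star=\tilde{\mathbf R}_0+\sum_{k\in\mathcal K}\tilde{\mathbf W}_k-\sum_{k\in\mathcal K}\mathbf w_k^\star(\mathbf w_k^\star)^H$ form an optimal solution of (P1.1).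
   Context: This is the transmit beamforming subproblem of an IRS-enabled integrated sensing and communication system with a fixed IRS reflection vector: $\mathbf h_k$ is the combined channel from the base station ($M$ antennas) to user $k$, $\mathbf w_k$ the information beamformer for user $k$, $\mathbf R_0$ the covariance matrix of the dedicated sensing signal, $\mathbf G$ the base-station-to-IRS channel, $\Gamma_k$ the SINR threshold, $\sigma_k^2$ the noise variance, and $P_0$ the power budget. The objective is (up to a positive constant) the Cramér-Rao bound for estimating the target response matrix. Here users cannot cancel sensing-signal interference, hence the term $\mathbf h_k^H\mathbf R_0\mathbf h_k$ in the SINR. *)

theory Defs
  imports "Jordan_Normal_Form.DL_Rank" "HOL-Library.Extended_Real"
begin

text \<open>Complex matrices/vectors are Jordan_Normal_Form matrices with explicit dimensions.
  Users are indexed by 0..<K (the paper's 1..K).\<close>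

definition ctrans :: "complex mat \<Rightarrow> complex mat" where
  "ctrans A = transpose_mat (map_mat cnj A)"

definition mtrace :: "complex mat \<Rightarrow> complex" where
  "mtrace A = (\<Sum>i<dim_row A. A $$ (i,i))"

definition cinner :: "complex vec \<Rightarrow> complex vec \<Rightarrow> complex" where
  "cinner x y = (\<Sum>i<dim_vec x. cnj (x $ i) * y $ i)"

definition outer :: "complex vec \<Rightarrow> complex mat" where
  "outer x = mat (dim_vec x) (dim_vec x) (\<lambda>(i,j). x $ i * cnj (x $ j))"

definition vnorm2 :: "complex vec \<Rightarrow> real" where
  "vnorm2 x = (\<Sum>i<dim_vec x. (cmod (x $ i))\<^sup>2)"

definition hermitian :: "nat \<Rightarrow> complex mat \<Rightarrow> bool" where
  "hermitian n A \<longleftrightarrow> A \<in> carrier_mat n n \<and> ctrans A = A"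

definition psd :: "nat \<Rightarrow> complex mat \<Rightarrow> bool" where
  "psd n A \<longleftrightarrow> hermitian n A \<and> (\<forall>x\<in>carrier_vec n. 0 \<le> Re (cinner x (A *\<^sub>v x)))"

definition msum :: "nat \<Rightarrow> nat \<Rightarrow> (nat \<Rightarrow> complex mat) \<Rightarrow> complex mat" where
  "msum n K W = mat n n (\<lambda>(i,j). \<Sum>k<K. W k $$ (i,j))"

text \<open>f(R) = tr((G R G^H)^{-1}) if invertible, +infinity otherwise.
  (For Hermitian invertible G R G^H the trace of the inverse is real; we take its real part.)\<close>
definition crb :: "complex mat \<Rightarrow> complex mat \<Rightarrow> ereal" where
  "crb G R = (case mat_inverse (G * R * ctrans G) of
                None \<Rightarrow> \<infinity>
              | Some B \<Rightarrow> ereal (Re (mtrace B)))"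

definition obj11 :: "nat \<Rightarrow> nat \<Rightarrow> complex mat \<Rightarrow> (nat \<Rightarrow> complex vec) \<Rightarrow> complex mat \<Rightarrow> ereal" where
  "obj11 M K G w R0 = crb G (msum M K (\<lambda>k. outer (w k)) + R0)"

definition feas11 :: "nat \<Rightarrow> nat \<Rightarrow> (nat \<Rightarrow> complex vec) \<Rightarrow> (nat \<Rightarrow> real) \<Rightarrow> (nat \<Rightarrow> real) \<Rightarrow> real
    \<Rightarrow> (nat \<Rightarrow> complex vec) \<Rightarrow> complex mat \<Rightarrow> bool" where
  "feas11 M K h \<Gamma> \<sigma>2 P0 w R0 \<longleftrightarrow>
     (\<forall>k<K. w k \<in> carrier_vec M) \<and> hermitian M R0 \<and>
     (\<forall>k<K. (cmod (cinner (h k) (w k)))\<^sup>2 /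
        ((\<Sum>i\<in>{..<K} - {k}. (cmod (cinner (h k) (w i)))\<^sup>2) + Re (cinner (h k) (R0 *\<^sub>v h k)) + \<sigma>2 k)
        \<ge> \<Gamma> k) \<and>
     (\<Sum>k<K. vnorm2 (w k)) + Re (mtrace R0) \<le> P0 \<and>
     psd M R0"

definition val11 :: "nat \<Rightarrow> nat \<Rightarrow> complex mat \<Rightarrow> (nat \<Rightarrow> complex vec) \<Rightarrow> (nat \<Rightarrow> real) \<Rightarrow> (nat \<Rightarrow> real)
    \<Rightarrow> real \<Rightarrow> ereal" where
  "val11 M K G h \<Gamma> \<sigma>2 P0 =
     (INF p \<in> {(w, R0). feas11 M K h \<Gamma> \<sigma>2 P0 w R0}. obj11 M K G (fst p) (snd p))"

definition obj12 :: "nat \<Rightarrow> nat \<Rightarrow> complex mat \<Rightarrow> (nat \<Rightarrow> complex mat) \<Rightarrow> complex mat \<Rightarrow> ereal" where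
  "obj12 M K G W R0 = crb G (msum M K W + R0)"

definition feasSDR :: "nat \<Rightarrow> nat \<Rightarrow> (nat \<Rightarrow> complex vec) \<Rightarrow> (nat \<Rightarrow> real) \<Rightarrow> (nat \<Rightarrow> real) \<Rightarrow> real
    \<Rightarrow> (nat \<Rightarrow> complex mat) \<Rightarrow> complex mat \<Rightarrow> bool" where
  "feasSDR M K h \<Gamma> \<sigma>2 P0 W R0 \<longleftrightarrow>
     (\<forall>k<K. hermitian M (W k)) \<and> hermitian M R0 \<and>
     (\<forall>k<K. Re (mtrace (outer (h k) * W k)) / \<Gamma> k
              - (\<Sum>i\<in>{..<K} - {k}. Re (mtrace (outer (h k) * W i)))
              - Re (mtrace (outer (h k) * R0)) \<ge> \<sigma>2 k) \<and>
     (\<Sum>k<K. Re (mtrace (W k))) + Re (mtrace R0) \<le> P0 \<and>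
     psd M R0 \<and> (\<forall>k<K. psd M (W k))"

definition feas12 :: "nat \<Rightarrow> nat \<Rightarrow> (nat \<Rightarrow> complex vec) \<Rightarrow> (nat \<Rightarrow> real) \<Rightarrow> (nat \<Rightarrow> real) \<Rightarrow> real
    \<Rightarrow> (nat \<Rightarrow> complex mat) \<Rightarrow> complex mat \<Rightarrow> bool" where
  "feas12 M K h \<Gamma> \<sigma>2 P0 W R0 \<longleftrightarrow>
     feasSDR M K h \<Gamma> \<sigma>2 P0 W R0 \<and> (\<forall>k<K. vec_space.rank M (W k) \<le> 1)"

definition val12 :: "nat \<Rightarrow> nat \<Rightarrow> complex mat \<Rightarrow> (nat \<Rightarrow> complex vec) \<Rightarrow> (nat \<Rightarrow> real) \<Rightarrow> (nat \<Rightarrow> real)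
    \<Rightarrow> real \<Rightarrow> ereal" where
  "val12 M K G h \<Gamma> \<sigma>2 P0 =
     (INF p \<in> {(W, R0). feas12 M K h \<Gamma> \<sigma>2 P0 W R0}. obj12 M K G (fst p) (snd p))"

definition valSDR :: "nat \<Rightarrow> nat \<Rightarrow> complex mat \<Rightarrow> (nat \<Rightarrow> complex vec) \<Rightarrow> (nat \<Rightarrow> real) \<Rightarrow> (nat \<Rightarrow> real)
    \<Rightarrow> real \<Rightarrow> ereal" where
  "valSDR M K G h \<Gamma> \<sigma>2 P0 =
     (INF p \<in> {(W, R0). feasSDR M K h \<Gamma> \<sigma>2 P0 W R0}. obj12 M K G (fst p) (snd p))"

end

theory Submission
  imports Defs
begin

text \<open>The relaxation (SDR1.2) can only lower the optimum, and a feasible point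
  \<open>(w\<^sub>k, R\<^sub>0)\<close> of (P1.1) gives the rank-one feasible point \<open>(w\<^sub>k w\<^sub>k\<^sup>H, R\<^sub>0)\<close> of (P1.2) with the same
  objective, so val(SDR1.2) \<open>\<le>\<close> val(P1.2) \<open>\<le>\<close> val(P1.1).
  Conversely, take a feasible point \<open>(W\<^sub>k, R\<^sub>0)\<close> of (SDR1.2) and set
  \<open>w\<^sub>k = W\<^sub>k h\<^sub>k / sqrt (h\<^sub>k\<^sup>H W\<^sub>k h\<^sub>k)\<close>. The Cauchy-Schwarz inequality for the semidefinite form of
  \<open>W\<^sub>k\<close> makes \<open>W\<^sub>k - w\<^sub>k w\<^sub>k\<^sup>H\<close> positive semidefinite, while \<open>|h\<^sub>k\<^sup>H w\<^sub>k|\<^sup>2 = h\<^sub>k\<^sup>H W\<^sub>k h\<^sub>k\<close>.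
  Moving all residuals \<open>W\<^sub>k - w\<^sub>k w\<^sub>k\<^sup>H\<close> into the sensing covariance leaves the total transmit
  covariance (hence the objective and the power) unchanged, keeps the useful power of every
  user, and therefore also keeps its interference-plus-noise power: all SINR constraints
  survive, and val(P1.1) \<open>\<le>\<close> val(SDR1.2).\<close>

lemma mult_mat_vec_index_sum:
  assumes "A \<in> carrier_mat n n" "y \<in> carrier_vec n" "i < n"
  shows "(A *\<^sub>v y) $ i = (\<Sum>j<n. A $$ (i,j) * y $ j)"
  using assms by (simp add: scalar_prod_def atLeast0LessThan)

lemma cinner_mult_mat_vec_double_sum:
  assumes "A \<in> carrier_mat n n" "x \<in> carrier_vec n" "y \<in> carrier_vec n"
  shows "cinner x (A *\<^sub>v y) = (\<Sum>i<n. \<Sum>j<n. cnj (x $ i) * A $$ (i,j) * y $ j)"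
  using assms
  by (simp add: cinner_def mult_mat_vec_index_sum sum_distrib_left mult.assoc del: index_mult_mat_vec)

lemma hermitian_carrier: "hermitian n A \<Longrightarrow> A \<in> carrier_mat n n"
  by (simp add: hermitian_def)

lemma hermitian_entry:
  assumes "hermitian n A" "i < n" "j < n"
  shows "A $$ (j,i) = cnj (A $$ (i,j))"
proof -
  have "ctrans A $$ (j,i) = cnj (A $$ (i,j))"
    using assms hermitian_carrier[OF assms(1)] by (simp add: ctrans_def)
  moreover have "ctrans A = A"
    using assms(1) by (simp add: hermitian_def)
  ultimately show ?thesis by simp
qed

lemma hermitian_cinner_swap:
  assumes "hermitian n A" "x \<in> carrier_vec n" "y \<in> carrier_vec n"
  shows "cinner x (A *\<^sub>v y) = cnj (cinner y (A *\<^sub>v x))"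
proof -
  have A: "A \<in> carrier_mat n n"
    using assms(1) by (rule hermitian_carrier)
  have "cnj (cinner y (A *\<^sub>v x)) = (\<Sum>i<n. \<Sum>j<n. y $ i * cnj (A $$ (i,j)) * cnj (x $ j))"
    by (simp add: cinner_mult_mat_vec_double_sum[OF A assms(3,2)])
  also have "\<dots> = (\<Sum>i<n. \<Sum>j<n. cnj (x $ j) * A $$ (j,i) * y $ i)"
  proof (intro sum.cong refl)
    fix i j assume "i \<in> {..<n}" "j \<in> {..<n}"
    then have "cnj (A $$ (i,j)) = A $$ (j,i)"
      by (simp add: hermitian_entry[OF assms(1), of j i])
    then show "y $ i * cnj (A $$ (i,j)) * cnj (x $ j) = cnj (x $ j) * A $$ (j,i) * y $ i"
      by (simp add: mult_ac)
  qed
  also have "\<dots> = cinner x (A *\<^sub>v y)"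
    by (subst sum.swap) (simp add: cinner_mult_mat_vec_double_sum[OF A assms(2,3)])
  finally show ?thesis by simp
qed

lemma hermitian_cinner_self_real:
  assumes "hermitian n A" "x \<in> carrier_vec n"
  shows "cinner x (A *\<^sub>v x) = complex_of_real (Re (cinner x (A *\<^sub>v x)))"
proof -
  have "Im (cinner x (A *\<^sub>v x)) = Im (cnj (cinner x (A *\<^sub>v x)))"
    using hermitian_cinner_swap[OF assms assms(2)] by (rule arg_cong)
  then show ?thesis by (simp add: complex_eq_iff)
qed

lemma cinner_minus_left:
  "x \<in> carrier_vec n \<Longrightarrow> y \<in> carrier_vec n \<Longrightarrow> z \<in> carrier_vec n \<Longrightarrow>
    cinner (x - y) z = cinner x z - cinner y z"
  by (simp add: cinner_def sum_subtractf left_diff_distrib)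

lemma cinner_smult_left: "cinner (c \<cdot>\<^sub>v x) z = cnj c * cinner x z"
  by (simp add: cinner_def sum_distrib_left mult.assoc)

lemma cinner_add_right:
  "x \<in> carrier_vec n \<Longrightarrow> y \<in> carrier_vec n \<Longrightarrow> z \<in> carrier_vec n \<Longrightarrow>
    cinner z (x + y) = cinner z x + cinner z y"
  by (simp add: cinner_def sum.distrib distrib_left)

lemma cinner_minus_right:
  "x \<in> carrier_vec n \<Longrightarrow> y \<in> carrier_vec n \<Longrightarrow> z \<in> carrier_vec n \<Longrightarrow>
    cinner z (x - y) = cinner z x - cinner z y"
  by (simp add: cinner_def sum_subtractf right_diff_distrib)

lemma cinner_smult_right:
  "x \<in> carrier_vec n \<Longrightarrow> z \<in> carrier_vec n \<Longrightarrow> cinner z (c \<cdot>\<^sub>v x) = c * cinner z x"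
  by (simp add: cinner_def sum_distrib_left mult.left_commute)

lemma cinner_add_mat_mult_vec:
  assumes "A \<in> carrier_mat n n" "B \<in> carrier_mat n n" "x \<in> carrier_vec n"
  shows "cinner x ((A + B) *\<^sub>v x) = cinner x (A *\<^sub>v x) + cinner x (B *\<^sub>v x)"
  using assms by (simp add: add_mult_distrib_mat_vec cinner_add_right[of _ n])

lemma cinner_minus_mat_mult_vec:
  assumes "A \<in> carrier_mat n n" "B \<in> carrier_mat n n" "x \<in> carrier_vec n"
  shows "cinner x ((A - B) *\<^sub>v x) = cinner x (A *\<^sub>v x) - cinner x (B *\<^sub>v x)"
  using assms by (simp add: minus_mult_distrib_mat_vec cinner_minus_right[of _ n])

lemma msum_carrier: "msum n K W \<in> carrier_mat n n"
  by (simp add: msum_def)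

lemma msum_diff:
  assumes "\<And>k. k < K \<Longrightarrow> A k \<in> carrier_mat n n" "\<And>k. k < K \<Longrightarrow> B k \<in> carrier_mat n n"
  shows "msum n K A - msum n K B = msum n K (\<lambda>k. A k - B k)"
proof (rule eq_matI)
  fix i j assume "i < dim_row (msum n K (\<lambda>k. A k - B k))" "j < dim_col (msum n K (\<lambda>k. A k - B k))"
  then have ij: "i < n" "j < n" by (simp_all add: msum_def)
  have "(\<Sum>k<K. A k $$ (i,j)) - (\<Sum>k<K. B k $$ (i,j)) = (\<Sum>k<K. (A k - B k) $$ (i,j))"
    unfolding sum_subtractf[symmetric]
  proof (rule sum.cong[OF refl])
    fix k assume "k \<in> {..<K}"
    then show "A k $$ (i,j) - B k $$ (i,j) = (A k - B k) $$ (i,j)"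
      using assms[of k] ij by auto
  qed
  then show "(msum n K A - msum n K B) $$ (i,j) = msum n K (\<lambda>k. A k - B k) $$ (i,j)"
    using ij by (simp add: msum_def)
qed (simp_all add: msum_def)

lemma cinner_msum_mult_vec:
  assumes "\<And>k. k < K \<Longrightarrow> W k \<in> carrier_mat n n" "x \<in> carrier_vec n"
  shows "cinner x (msum n K W *\<^sub>v x) = (\<Sum>k<K. cinner x (W k *\<^sub>v x))"
proof -
  have "cinner x (msum n K W *\<^sub>v x) = (\<Sum>i<n. \<Sum>j<n. cnj (x $ i) * msum n K W $$ (i,j) * x $ j)"
    by (rule cinner_mult_mat_vec_double_sum[OF msum_carrier assms(2,2)])
  also have "\<dots> = (\<Sum>i<n. \<Sum>j<n. \<Sum>k<K. cnj (x $ i) * W k $$ (i,j) * x $ j)"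
    by (simp add: msum_def sum_distrib_left sum_distrib_right)
  also have "\<dots> = (\<Sum>k<K. \<Sum>i<n. \<Sum>j<n. cnj (x $ i) * W k $$ (i,j) * x $ j)"
    by (simp add: sum.swap[where A = "{..<K}"])
  also have "\<dots> = (\<Sum>k<K. cinner x (W k *\<^sub>v x))"
    using assms by (intro sum.cong) (simp_all add: cinner_mult_mat_vec_double_sum[of _ n])
  finally show ?thesis .
qed

lemma Re_cinner_msum_add_mult_vec:
  assumes "\<And>k. k < K \<Longrightarrow> W k \<in> carrier_mat n n" "R \<in> carrier_mat n n" "x \<in> carrier_vec n"
  shows "Re (cinner x ((msum n K W + R) *\<^sub>v x))
    = (\<Sum>k<K. Re (cinner x (W k *\<^sub>v x))) + Re (cinner x (R *\<^sub>v x))"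
  using assms by (simp add: cinner_add_mat_mult_vec[OF msum_carrier] cinner_msum_mult_vec)

lemma mtrace_add: "A \<in> carrier_mat n n \<Longrightarrow> B \<in> carrier_mat n n \<Longrightarrow> mtrace (A + B) = mtrace A + mtrace B"
  by (simp add: mtrace_def sum.distrib)

lemma mtrace_msum:
  assumes "\<And>k. k < K \<Longrightarrow> W k \<in> carrier_mat n n"
  shows "mtrace (msum n K W) = (\<Sum>k<K. mtrace (W k))"
proof -
  have "mtrace (msum n K W) = (\<Sum>k<K. \<Sum>i<n. W k $$ (i,i))"
    by (simp add: mtrace_def msum_def sum.swap[where A = "{..<n}"])
  also have "\<dots> = (\<Sum>k<K. mtrace (W k))"
    using assms by (intro sum.cong) (auto simp: mtrace_def)
  finally show ?thesis .
qed

lemma Re_mtrace_msum_add: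
  assumes "\<And>k. k < K \<Longrightarrow> W k \<in> carrier_mat n n" "R \<in> carrier_mat n n"
  shows "Re (mtrace (msum n K W + R)) = (\<Sum>k<K. Re (mtrace (W k))) + Re (mtrace R)"
  using assms by (simp add: mtrace_add[OF msum_carrier] mtrace_msum)

lemma mtrace_outer_mult:
  assumes "h \<in> carrier_vec n" "W \<in> carrier_mat n n"
  shows "mtrace (outer h * W) = cinner h (W *\<^sub>v h)"
proof -
  have "mtrace (outer h * W) = (\<Sum>i<n. \<Sum>j<n. h $ i * cnj (h $ j) * W $$ (j,i))"
    using assms by (simp add: mtrace_def outer_def scalar_prod_def atLeast0LessThan)
  also have "\<dots> = cinner h (W *\<^sub>v h)"
    by (subst sum.swap) (simp add: cinner_mult_mat_vec_double_sum[OF assms(2,1,1)] mult_ac)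
  finally show ?thesis .
qed

lemma outer_carrier: "x \<in> carrier_vec n \<Longrightarrow> outer x \<in> carrier_mat n n"
  by (simp add: outer_def)

lemma mtrace_outer: "mtrace (outer w) = complex_of_real (vnorm2 w)"
  by (simp add: mtrace_def outer_def vnorm2_def complex_norm_square del: of_real_power)

lemma outer_mult_vec:
  assumes "w \<in> carrier_vec n" "x \<in> carrier_vec n"
  shows "outer w *\<^sub>v x = cnj (cinner x w) \<cdot>\<^sub>v w"
proof (rule eq_vecI)
  fix i assume "i < dim_vec (cnj (cinner x w) \<cdot>\<^sub>v w)"
  then have i: "i < n" using assms by simp
  have "(outer w *\<^sub>v x) $ i = (\<Sum>j<n. w $ i * (cnj (w $ j) * x $ j))"
    using assms i
    by (subst mult_mat_vec_index_sum[OF outer_carrier]) (auto simp: outer_def mult.assoc intro!: sum.cong)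
  also have "\<dots> = w $ i * cnj (cinner x w)"
    using assms by (simp add: cinner_def sum_distrib_left mult_ac)
  finally show "(outer w *\<^sub>v x) $ i = (cnj (cinner x w) \<cdot>\<^sub>v w) $ i"
    using assms i by (simp add: mult.commute)
qed (use assms in \<open>simp add: outer_def\<close>)

lemma cinner_outer_mult_vec:
  assumes "w \<in> carrier_vec n" "x \<in> carrier_vec n"
  shows "cinner x (outer w *\<^sub>v x) = complex_of_real ((cmod (cinner x w))\<^sup>2)"
  using assms
  by (simp add: outer_mult_vec cinner_smult_right complex_norm_square mult.commute del: of_real_power)

lemma Re_mtrace_outer_mult_outer:
  assumes "h \<in> carrier_vec n" "w \<in> carrier_vec n"
  shows "Re (mtrace (outer h * outer w)) = (cmod (cinner h w))\<^sup>2"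
  using assms by (simp add: mtrace_outer_mult outer_carrier cinner_outer_mult_vec del: of_real_power)

lemma hermitian_outer: "w \<in> carrier_vec n \<Longrightarrow> hermitian n (outer w)"
  unfolding hermitian_def by (auto simp: ctrans_def outer_def intro!: eq_matI)

lemma psd_outer: "w \<in> carrier_vec n \<Longrightarrow> psd n (outer w)"
  by (auto simp: psd_def hermitian_outer cinner_outer_mult_vec)

lemma rank_outer_le_1: "w \<in> carrier_vec n \<Longrightarrow> vec_space.rank n (outer w) \<le> 1"
  by (rule vec_space.rank_le_1_product_entries[where f = "\<lambda>i. w $ i" and g = "\<lambda>j. cnj (w $ j)"])
    (auto simp: outer_def)

lemma ctrans_add: "A \<in> carrier_mat n m \<Longrightarrow> B \<in> carrier_mat n m \<Longrightarrow> ctrans (A + B) = ctrans A + ctrans B"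
  by (auto simp: ctrans_def intro!: eq_matI)

lemma ctrans_minus: "A \<in> carrier_mat n m \<Longrightarrow> B \<in> carrier_mat n m \<Longrightarrow> ctrans (A - B) = ctrans A - ctrans B"
  by (auto simp: ctrans_def intro!: eq_matI)

lemma hermitian_add: "hermitian n A \<Longrightarrow> hermitian n B \<Longrightarrow> hermitian n (A + B)"
  unfolding hermitian_def by (metis add_carrier_mat ctrans_add)

lemma hermitian_minus: "hermitian n A \<Longrightarrow> hermitian n B \<Longrightarrow> hermitian n (A - B)"
  unfolding hermitian_def by (metis minus_carrier_mat ctrans_minus)

lemma hermitian_msum:
  assumes "\<And>k. k < K \<Longrightarrow> hermitian n (W k)"
  shows "hermitian n (msum n K W)"
proof -
  have "ctrans (msum n K W) = msum n K W"
  proof (rule eq_matI)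
    fix i j assume "i < dim_row (msum n K W)" "j < dim_col (msum n K W)"
    then have ij: "i < n" "j < n" by (simp_all add: msum_def)
    have "ctrans (msum n K W) $$ (i,j) = (\<Sum>k<K. cnj (W k $$ (j,i)))"
      using ij by (simp add: ctrans_def msum_def)
    also have "\<dots> = (\<Sum>k<K. W k $$ (i,j))"
    proof (rule sum.cong[OF refl])
      fix k assume "k \<in> {..<K}"
      then show "cnj (W k $$ (j,i)) = W k $$ (i,j)"
        using assms ij hermitian_entry[of n "W k" j i] by simp
    qed
    finally show "ctrans (msum n K W) $$ (i,j) = msum n K W $$ (i,j)"
      using ij by (simp add: msum_def)
  qed (simp_all add: ctrans_def msum_def)
  then show ?thesis by (simp add: hermitian_def msum_carrier)
qed

lemma psd_add:
  assumes "psd n A" "psd n B"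
  shows "psd n (A + B)"
proof -
  have H: "hermitian n A" "hermitian n B"
    using assms by (simp_all add: psd_def)
  then show ?thesis
    using assms hermitian_carrier[OF H(1)] hermitian_carrier[OF H(2)]
    by (simp add: psd_def hermitian_add cinner_add_mat_mult_vec)
qed

lemma psd_msum:
  assumes "\<And>k. k < K \<Longrightarrow> psd n (W k)"
  shows "psd n (msum n K W)"
  using assms
  by (auto simp: psd_def hermitian_msum cinner_msum_mult_vec hermitian_carrier intro!: sum_nonneg)

lemma psd_cauchy_schwarz:
  assumes "psd n W" "x \<in> carrier_vec n" "y \<in> carrier_vec n"
    and pos: "0 < Re (cinner y (W *\<^sub>v y))"
  shows "(cmod (cinner y (W *\<^sub>v x)))\<^sup>2 \<le> Re (cinner x (W *\<^sub>v x)) * Re (cinner y (W *\<^sub>v y))"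
proof -
  have H: "hermitian n W" and W: "W \<in> carrier_mat n n"
    using assms(1) by (auto simp: psd_def hermitian_carrier)
  define a where "a = Re (cinner y (W *\<^sub>v y))"
  define b where "b = cinner y (W *\<^sub>v x)"
  define t where "t = b / complex_of_real a"
  have yy: "cinner y (W *\<^sub>v y) = complex_of_real a"
    unfolding a_def by (rule hermitian_cinner_self_real[OF H assms(3)])
  have xy: "cinner x (W *\<^sub>v y) = cnj b"
    unfolding b_def by (rule hermitian_cinner_swap[OF H assms(2,3)])
  have "cinner (x - t \<cdot>\<^sub>v y) (W *\<^sub>v (x - t \<cdot>\<^sub>v y))
      = cinner x (W *\<^sub>v x) - t * cnj b - cnj t * (b - t * complex_of_real a)"
    using W assms(2,3)
    by (simp add: mult_minus_distrib_mat_vec mult_mat_vec cinner_minus_left[of _ n]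
        cinner_minus_right[of _ n] cinner_smult_left cinner_smult_right[of _ n] yy xy
        flip: b_def) (simp add: algebra_simps)
  also have "t * complex_of_real a = b"
    using pos unfolding t_def a_def by simp
  finally have "Re (cinner (x - t \<cdot>\<^sub>v y) (W *\<^sub>v (x - t \<cdot>\<^sub>v y))) = Re (cinner x (W *\<^sub>v x)) - (cmod b)\<^sup>2 / a"
    unfolding t_def by (simp add: complex_mult_cnj cmod_power2 del: of_real_power)
  moreover have "0 \<le> Re (cinner (x - t \<cdot>\<^sub>v y) (W *\<^sub>v (x - t \<cdot>\<^sub>v y)))"
    using assms(1-3) by (simp add: psd_def)
  ultimately show ?thesis
    using pos unfolding a_def b_def by (simp add: divide_le_eq mult.commute)
qed

definition normalized_beam :: "complex mat \<Rightarrow> complex vec \<Rightarrow> complex vec" where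
  "normalized_beam W h = complex_of_real (1 / sqrt (Re (cinner h (W *\<^sub>v h)))) \<cdot>\<^sub>v (W *\<^sub>v h)"

lemma cmod_cinner_normalized_beam:
  assumes "W \<in> carrier_mat n n" "h \<in> carrier_vec n" "x \<in> carrier_vec n" "0 \<le> Re (cinner h (W *\<^sub>v h))"
  shows "(cmod (cinner x (normalized_beam W h)))\<^sup>2 = (cmod (cinner x (W *\<^sub>v h)))\<^sup>2 / Re (cinner h (W *\<^sub>v h))"
  using assms
  by (simp add: normalized_beam_def cinner_smult_right[of _ n] norm_divide power_divide)

lemma cmod_cinner_normalized_beam_self:
  assumes "psd n W" "h \<in> carrier_vec n"
  shows "(cmod (cinner h (normalized_beam W h)))\<^sup>2 = Re (cinner h (W *\<^sub>v h))"
proof -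
  have H: "hermitian n W" and nonneg: "0 \<le> Re (cinner h (W *\<^sub>v h))"
    using assms by (auto simp: psd_def)
  have "(cmod (cinner h (normalized_beam W h)))\<^sup>2 = (cmod (cinner h (W *\<^sub>v h)))\<^sup>2 / Re (cinner h (W *\<^sub>v h))"
    by (rule cmod_cinner_normalized_beam[OF hermitian_carrier[OF H] assms(2,2) nonneg])
  also have "cmod (cinner h (W *\<^sub>v h)) = Re (cinner h (W *\<^sub>v h))"
    using nonneg by (subst hermitian_cinner_self_real[OF H assms(2)]) simp
  finally show ?thesis
    by (simp add: power2_eq_square)
qed

lemma psd_minus_outer_normalized_beam:
  assumes "psd n W" "h \<in> carrier_vec n"
  shows "psd n (W - outer (normalized_beam W h))"
proof -
  have H: "hermitian n W" and W: "W \<in> carrier_mat n n" and nonneg: "0 \<le> Re (cinner h (W *\<^sub>v h))"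
    using assms by (auto simp: psd_def hermitian_carrier)
  have w: "normalized_beam W h \<in> carrier_vec n"
    using W assms(2) by (simp add: normalized_beam_def)
  have "(cmod (cinner x (normalized_beam W h)))\<^sup>2 \<le> Re (cinner x (W *\<^sub>v x))"
    if x: "x \<in> carrier_vec n" for x
  proof (cases "Re (cinner h (W *\<^sub>v h)) = 0")
    case True
    \<comment> \<open>then the beam is the zero vector, since \<open>1 / sqrt 0 = 0\<close> in HOL\<close>
    then show ?thesis
      using assms(1) x by (simp add: cmod_cinner_normalized_beam[OF W assms(2) x] psd_def)
  next
    case False
    have "cmod (cinner x (W *\<^sub>v h)) = cmod (cinner h (W *\<^sub>v x))"
      by (simp add: hermitian_cinner_swap[OF H x assms(2)])
    then show ?thesis
      using psd_cauchy_schwarz[OF assms(1) x assms(2)] False nonneg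
      by (simp add: cmod_cinner_normalized_beam[OF W assms(2) x nonneg] divide_le_eq)
  qed
  then show ?thesis
    using H w W by (simp add: psd_def hermitian_minus hermitian_outer cinner_minus_mat_mult_vec
        outer_carrier cinner_outer_mult_vec del: of_real_power)
qed

lemma sinr_constraint_iff:
  fixes \<Gamma> \<sigma>2 s I r :: real
  assumes "0 < \<Gamma>" "0 < I + r + \<sigma>2"
  shows "\<Gamma> \<le> s / (I + r + \<sigma>2) \<longleftrightarrow> \<sigma>2 \<le> s / \<Gamma> - I - r"
proof -
  have "\<Gamma> \<le> s / (I + r + \<sigma>2) \<longleftrightarrow> (I + r + \<sigma>2) * \<Gamma> \<le> s"
    using assms(2) by (simp add: le_divide_eq mult.commute)
  also have "\<dots> \<longleftrightarrow> I + r + \<sigma>2 \<le> s / \<Gamma>"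
    using assms(1) by (simp add: le_divide_eq)
  finally show ?thesis by linarith
qed

lemma feasSDR_sinr:
  assumes "\<forall>k<K. h k \<in> carrier_vec M" "feasSDR M K h \<Gamma> \<sigma>2 P0 W R" "k < K"
  shows "\<sigma>2 k \<le> Re (cinner (h k) (W k *\<^sub>v h k)) / \<Gamma> k
    - (\<Sum>i\<in>{..<K} - {k}. Re (cinner (h k) (W i *\<^sub>v h k))) - Re (cinner (h k) (R *\<^sub>v h k))"
proof -
  have hk: "h k \<in> carrier_vec M"
    using assms(1,3) by blast
  have W: "\<And>i. i < K \<Longrightarrow> W i \<in> carrier_mat M M" and R: "R \<in> carrier_mat M M"
    using assms(2) by (auto simp: feasSDR_def hermitian_carrier)
  have "\<sigma>2 k \<le> Re (mtrace (outer (h k) * W k)) / \<Gamma> k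
      - (\<Sum>i\<in>{..<K} - {k}. Re (mtrace (outer (h k) * W i))) - Re (mtrace (outer (h k) * R))"
    using assms(2,3) unfolding feasSDR_def by blast
  moreover have "(\<Sum>i\<in>{..<K} - {k}. Re (mtrace (outer (h k) * W i)))
      = (\<Sum>i\<in>{..<K} - {k}. Re (cinner (h k) (W i *\<^sub>v h k)))"
    using hk W by (intro sum.cong) (auto simp: mtrace_outer_mult)
  ultimately show ?thesis
    using assms(3) hk W R by (simp add: mtrace_outer_mult)
qed

lemma feas12_outer_if_feas11:
  assumes h: "\<forall>k<K. h k \<in> carrier_vec M" and \<Gamma>: "\<forall>k<K. 0 < \<Gamma> k" and \<sigma>: "\<forall>k<K. 0 < \<sigma>2 k"
    and feas: "feas11 M K h \<Gamma> \<sigma>2 P0 w R"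
  shows "feas12 M K h \<Gamma> \<sigma>2 P0 (\<lambda>k. outer (w k)) R"
proof -
  have w: "\<forall>k<K. w k \<in> carrier_vec M" and R: "psd M R"
    using feas by (auto simp: feas11_def)
  have "\<sigma>2 k \<le> Re (mtrace (outer (h k) * outer (w k))) / \<Gamma> k
      - (\<Sum>i\<in>{..<K} - {k}. Re (mtrace (outer (h k) * outer (w i))))
      - Re (mtrace (outer (h k) * R))" if k: "k < K" for k
  proof -
    let ?s = "(cmod (cinner (h k) (w k)))\<^sup>2"
    let ?I = "\<Sum>i\<in>{..<K} - {k}. (cmod (cinner (h k) (w i)))\<^sup>2"
    let ?r = "Re (cinner (h k) (R *\<^sub>v h k))"
    have hk: "h k \<in> carrier_vec M"
      using h k by blast
    have "0 \<le> ?I" "0 \<le> ?r"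
      using R hk by (simp_all add: sum_nonneg psd_def)
    then have "0 < ?I + ?r + \<sigma>2 k"
      using \<sigma> k by (simp add: add_nonneg_pos)
    moreover have "\<Gamma> k \<le> ?s / (?I + ?r + \<sigma>2 k)"
      using feas k unfolding feas11_def by blast
    ultimately have "\<sigma>2 k \<le> ?s / \<Gamma> k - ?I - ?r"
      using sinr_constraint_iff \<Gamma> k by blast
    moreover have "(\<Sum>i\<in>{..<K} - {k}. Re (mtrace (outer (h k) * outer (w i)))) = ?I"
      using hk w by (intro sum.cong) (auto simp: Re_mtrace_outer_mult_outer)
    moreover have "Re (mtrace (outer (h k) * R)) = ?r"
      using hk R by (simp add: mtrace_outer_mult psd_def hermitian_carrier)
    ultimately show ?thesis
      using hk w k by (simp add: Re_mtrace_outer_mult_outer)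
  qed
  moreover have "(\<Sum>k<K. Re (mtrace (outer (w k)))) + Re (mtrace R) \<le> P0"
    using feas by (simp add: feas11_def mtrace_outer)
  moreover have "\<forall>k<K. psd M (outer (w k)) \<and> vec_space.rank M (outer (w k)) \<le> 1"
    using w psd_outer rank_outer_le_1 by blast
  ultimately show ?thesis
    using R unfolding feas12_def feasSDR_def psd_def by blast
qed

lemma feas11_if_feasSDR_same_total_cov:
  assumes h: "\<forall>k<K. h k \<in> carrier_vec M" and \<Gamma>: "\<forall>k<K. 0 < \<Gamma> k" and \<sigma>: "\<forall>k<K. 0 < \<sigma>2 k"
    and sdr: "feasSDR M K h \<Gamma> \<sigma>2 P0 W R"
    and w: "\<forall>k<K. w k \<in> carrier_vec M" and R': "psd M R'"
    and total: "msum M K (\<lambda>k. outer (w k)) + R' = msum M K W + R"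
    and useful: "\<forall>k<K. (cmod (cinner (h k) (w k)))\<^sup>2 = Re (cinner (h k) (W k *\<^sub>v h k))"
  shows "feas11 M K h \<Gamma> \<sigma>2 P0 w R'"
proof -
  have W: "\<And>k. k < K \<Longrightarrow> psd M (W k)" and R: "psd M R"
    using sdr by (simp_all add: feasSDR_def)
  have Wc: "\<And>k. k < K \<Longrightarrow> W k \<in> carrier_mat M M" and Rc: "R \<in> carrier_mat M M"
    and R'c: "R' \<in> carrier_mat M M" and Oc: "\<And>k. k < K \<Longrightarrow> outer (w k) \<in> carrier_mat M M"
    using W R R' w by (simp_all add: psd_def hermitian_carrier outer_carrier)
  have "\<Gamma> k \<le> (cmod (cinner (h k) (w k)))\<^sup>2 /
      ((\<Sum>i\<in>{..<K} - {k}. (cmod (cinner (h k) (w i)))\<^sup>2) + Re (cinner (h k) (R' *\<^sub>v h k)) + \<sigma>2 k)"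
    if k: "k < K" for k
  proof -
    let ?a = "\<lambda>i. Re (cinner (h k) (W i *\<^sub>v h k))"
    let ?I = "\<Sum>i\<in>{..<K} - {k}. ?a i"
    let ?r = "Re (cinner (h k) (R *\<^sub>v h k))"
    have hk: "h k \<in> carrier_vec M"
      using h k by blast
    have "(\<Sum>i<K. (cmod (cinner (h k) (w i)))\<^sup>2) + Re (cinner (h k) (R' *\<^sub>v h k))
        = (\<Sum>i<K. Re (cinner (h k) (outer (w i) *\<^sub>v h k))) + Re (cinner (h k) (R' *\<^sub>v h k))"
      using hk w by (auto simp: cinner_outer_mult_vec simp del: of_real_power intro!: sum.cong)
    also have "\<dots> = Re (cinner (h k) ((msum M K (\<lambda>i. outer (w i)) + R') *\<^sub>v h k))"
      by (rule Re_cinner_msum_add_mult_vec[OF Oc R'c hk, symmetric])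
    also have "\<dots> = (\<Sum>i<K. ?a i) + ?r"
      unfolding total by (rule Re_cinner_msum_add_mult_vec[OF Wc Rc hk])
    finally have same_interference: "(\<Sum>i\<in>{..<K} - {k}. (cmod (cinner (h k) (w i)))\<^sup>2)
        + Re (cinner (h k) (R' *\<^sub>v h k)) = ?I + ?r"
      using useful k by (simp add: sum.remove[of "{..<K}" k])
    have "0 \<le> ?I" "0 \<le> ?r"
      using W R hk by (auto simp: psd_def intro!: sum_nonneg)
    then have "0 < ?I + ?r + \<sigma>2 k"
      using \<sigma> k by (simp add: add_nonneg_pos)
    moreover have "\<sigma>2 k \<le> ?a k / \<Gamma> k - ?I - ?r"
      by (rule feasSDR_sinr[OF h sdr k])
    ultimately have "\<Gamma> k \<le> ?a k / (?I + ?r + \<sigma>2 k)"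
      using sinr_constraint_iff \<Gamma> k by blast
    then show ?thesis
      using same_interference useful k by simp
  qed
  moreover have "(\<Sum>k<K. vnorm2 (w k)) + Re (mtrace R') \<le> P0"
  proof -
    have "(\<Sum>k<K. vnorm2 (w k)) + Re (mtrace R') = (\<Sum>k<K. Re (mtrace (W k))) + Re (mtrace R)"
      using arg_cong[OF total, of "\<lambda>A. Re (mtrace A)"] Wc Rc R'c Oc
      by (simp add: Re_mtrace_msum_add mtrace_outer)
    then show ?thesis
      using sdr by (simp add: feasSDR_def)
  qed
  ultimately show ?thesis
    using w R' unfolding feas11_def psd_def by blast
qed

lemma feas11_normalized_beams_if_feasSDR:
  assumes h: "\<forall>k<K. h k \<in> carrier_vec M" and \<Gamma>: "\<forall>k<K. 0 < \<Gamma> k" and \<sigma>: "\<forall>k<K. 0 < \<sigma>2 k"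
    and sdr: "feasSDR M K h \<Gamma> \<sigma>2 P0 W R"
  defines "w \<equiv> \<lambda>k. normalized_beam (W k) (h k)"
    and "R' \<equiv> R + msum M K W - msum M K (\<lambda>k. outer (normalized_beam (W k) (h k)))"
  shows "feas11 M K h \<Gamma> \<sigma>2 P0 w R'" and "obj11 M K G w R' = obj12 M K G W R"
proof -
  have W: "\<And>k. k < K \<Longrightarrow> psd M (W k)" and R: "psd M R"
    using sdr by (simp_all add: feasSDR_def)
  have Wc: "\<And>k. k < K \<Longrightarrow> W k \<in> carrier_mat M M" and Rc: "R \<in> carrier_mat M M"
    using W R by (simp_all add: psd_def hermitian_carrier)
  have wc: "\<forall>k<K. w k \<in> carrier_vec M"
    using Wc h by (auto simp: w_def normalized_beam_def intro: mult_mat_vec_carrier)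
  have "R' = R + (msum M K W - msum M K (\<lambda>k. outer (w k)))"
    using Rc msum_carrier[of M K W] msum_carrier[of M K "\<lambda>k. outer (w k)"]
    by (auto simp: R'_def w_def intro!: eq_matI)
  also have "msum M K W - msum M K (\<lambda>k. outer (w k)) = msum M K (\<lambda>k. W k - outer (w k))"
    using Wc wc by (simp add: msum_diff outer_carrier)
  finally have "R' = R + msum M K (\<lambda>k. W k - outer (w k))" .
  then have "psd M R'"
    using W h by (simp add: psd_add[OF R] psd_msum psd_minus_outer_normalized_beam w_def)
  moreover have total: "msum M K (\<lambda>k. outer (w k)) + R' = msum M K W + R"
    using Rc by (auto simp: R'_def w_def msum_def intro!: eq_matI)
  moreover have "\<forall>k<K. (cmod (cinner (h k) (w k)))\<^sup>2 = Re (cinner (h k) (W k *\<^sub>v h k))"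
    unfolding w_def using W h cmod_cinner_normalized_beam_self by blast
  ultimately show "feas11 M K h \<Gamma> \<sigma>2 P0 w R'"
    using feas11_if_feasSDR_same_total_cov[OF h \<Gamma> \<sigma> sdr wc] by blast
  show "obj11 M K G w R' = obj12 M K G W R"
    using total by (simp add: obj11_def obj12_def)
qed

lemma valSDR_le_val12: "valSDR M K G h \<Gamma> \<sigma>2 P0 \<le> val12 M K G h \<Gamma> \<sigma>2 P0"
  unfolding valSDR_def val12_def by (rule INF_superset_mono) (auto simp: feas12_def)

lemma val12_le_val11:
  assumes "\<forall>k<K. h k \<in> carrier_vec M" "\<forall>k<K. 0 < \<Gamma> k" "\<forall>k<K. 0 < \<sigma>2 k"
  shows "val12 M K G h \<Gamma> \<sigma>2 P0 \<le> val11 M K G h \<Gamma> \<sigma>2 P0"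
  unfolding val11_def
proof (rule INF_greatest)
  fix p assume "p \<in> {(w, R0). feas11 M K h \<Gamma> \<sigma>2 P0 w R0}"
  then have "feas12 M K h \<Gamma> \<sigma>2 P0 (\<lambda>k. outer (fst p k)) (snd p)"
    using feas12_outer_if_feas11[OF assms] by auto
  then have "val12 M K G h \<Gamma> \<sigma>2 P0 \<le> obj12 M K G (\<lambda>k. outer (fst p k)) (snd p)"
    unfolding val12_def by (auto intro: INF_lower2)
  then show "val12 M K G h \<Gamma> \<sigma>2 P0 \<le> obj11 M K G (fst p) (snd p)"
    by (simp add: obj11_def obj12_def)
qed

lemma val11_le_valSDR:
  assumes "\<forall>k<K. h k \<in> carrier_vec M" "\<forall>k<K. 0 < \<Gamma> k" "\<forall>k<K. 0 < \<sigma>2 k"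
  shows "val11 M K G h \<Gamma> \<sigma>2 P0 \<le> valSDR M K G h \<Gamma> \<sigma>2 P0"
  unfolding valSDR_def
proof (rule INF_greatest)
  fix p assume "p \<in> {(W, R0). feasSDR M K h \<Gamma> \<sigma>2 P0 W R0}"
  then have sdr: "feasSDR M K h \<Gamma> \<sigma>2 P0 (fst p) (snd p)"
    by auto
  then show "val11 M K G h \<Gamma> \<sigma>2 P0 \<le> obj12 M K G (fst p) (snd p)"
    unfolding val11_def
    using feas11_normalized_beams_if_feasSDR[OF assms sdr]
    by (auto intro!: INF_lower2)
qed

theorem proposition1:
  fixes M N K :: nat and G :: "complex mat" and h :: "nat \<Rightarrow> complex vec"
    and P0 :: real and \<Gamma> \<sigma>2 :: "nat \<Rightarrow> real"
  assumes "M \<ge> 1" and "N \<ge> 1" and "K \<ge> 1"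
    and "G \<in> carrier_mat N M"
    and "\<forall>k<K. h k \<in> carrier_vec M"
    and "P0 > 0"
    and "\<forall>k<K. \<Gamma> k > 0" and "\<forall>k<K. \<sigma>2 k > 0"
  shows "val11 M K G h \<Gamma> \<sigma>2 P0 = val12 M K G h \<Gamma> \<sigma>2 P0
    \<and> val12 M K G h \<Gamma> \<sigma>2 P0 = valSDR M K G h \<Gamma> \<sigma>2 P0
    \<and> (\<forall>Wt Rt. feasSDR M K h \<Gamma> \<sigma>2 P0 Wt Rt \<and> obj12 M K G Wt Rt = valSDR M K G h \<Gamma> \<sigma>2 P0 \<longrightarrow>
         (let ws = (\<lambda>k. complex_of_real (1 / sqrt (Re (cinner (h k) (Wt k *\<^sub>v h k)))) \<cdot>\<^sub>v (Wt k *\<^sub>v h k));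
              Rs = Rt + msum M K Wt - msum M K (\<lambda>k. outer (ws k))
          in feas11 M K h \<Gamma> \<sigma>2 P0 ws Rs \<and> obj11 M K G ws Rs = val11 M K G h \<Gamma> \<sigma>2 P0))"
proof -
  note h = assms(5) and \<Gamma> = assms(7) and \<sigma> = assms(8)
  have "val11 M K G h \<Gamma> \<sigma>2 P0 \<le> valSDR M K G h \<Gamma> \<sigma>2 P0"
    and "valSDR M K G h \<Gamma> \<sigma>2 P0 \<le> val12 M K G h \<Gamma> \<sigma>2 P0"
    and "val12 M K G h \<Gamma> \<sigma>2 P0 \<le> val11 M K G h \<Gamma> \<sigma>2 P0"
    by (rule val11_le_valSDR[OF h \<Gamma> \<sigma>] valSDR_le_val12 val12_le_val11[OF h \<Gamma> \<sigma>])+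
  then have val11_eq_val12: "val11 M K G h \<Gamma> \<sigma>2 P0 = val12 M K G h \<Gamma> \<sigma>2 P0"
    and val12_eq_valSDR: "val12 M K G h \<Gamma> \<sigma>2 P0 = valSDR M K G h \<Gamma> \<sigma>2 P0"
    by (simp_all add: order.antisym)
  moreover have "feas11 M K h \<Gamma> \<sigma>2 P0 ws Rs \<and> obj11 M K G ws Rs = val11 M K G h \<Gamma> \<sigma>2 P0"
    if "feasSDR M K h \<Gamma> \<sigma>2 P0 Wt Rt" "obj12 M K G Wt Rt = valSDR M K G h \<Gamma> \<sigma>2 P0"
      and "ws = (\<lambda>k. normalized_beam (Wt k) (h k))"
      and "Rs = Rt + msum M K Wt - msum M K (\<lambda>k. outer (ws k))"
    for Wt Rt ws Rs
    using feas11_normalized_beams_if_feasSDR[OF h \<Gamma> \<sigma> that(1)] that(2-4) val11_eq_val12 val12_eq_valSDR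
    by simp
  ultimately show ?thesis
    unfolding normalized_beam_def Let_def by blast
qed

end
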